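(* Let $\alpha>0$, $N\geq 3$, $x:=\frac{\log N}{6\log\log N}$, and let $y\geq x$. Let $\Phi(u)=e^{-u^2/2}$. Define the completely multiplicative function $q$ on $\mathbb{N}$ by $q_p:=1-p/x$ for primes $p\leq x$ and $q_p:=0$ for primes $p>x$, and set $R(t):=\prod_{p\leq x}(1-q_pp^{it})^{-1}=\sum_{n\geq1}q_nn^{it}$. Define the coefficients $a_{k,y}\geq0$ by $\zeta(1+it;y):=\prod_{p\leq y}(1-p^{-1-it})^{-1}=\sum_{k\geq1}a_{k,y}k^{-it}$. Then \[ \sum_{\ell\in\mathbb{Z}}|R(\alpha\ell)|^2\Phi\!\left(\frac{\ell}{N}\right)\geq\sqrt{2\pi}\,N \] and \[ \sum_{\ell\in\mathbb{Z}}\zeta(1+i\alpha\ell;y)\,|R(\alpha\ell)|^2\,\Phi\!\left(\frac{\ell}{N}\right)\;\geq\;\Bigl(\sum_{k\geq1}a_{k,y}q_k\Bigr)\sum_{\ell\in\mathbb{Z}}|R(\alpha\ell)|^2\Phi\!\left(\frac{\ell}{N}\right). \] In particular the left-hand side of the second inequality is a nonnegative real number.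
   Context: Products and sums over $p$ run over primes. Note $0\leq q_p<1$ for $p\leq x$, so all series converge absolutely. *)

theory Defs
  imports "HOL-Analysis.Analysis" "HOL-Computational_Algebra.Primes"
begin

definition xpar :: "real \<Rightarrow> real" where
  "xpar N = ln N / (6 * ln (ln N))"

definition Phi :: "real \<Rightarrow> real" where
  "Phi u = exp (- (u^2) / 2)"

definition q_prime :: "real \<Rightarrow> nat \<Rightarrow> real" where
  "q_prime x p = (if real p \<le> x then 1 - real p / x else 0)"

definition q_coef :: "real \<Rightarrow> nat \<Rightarrow> real" where
  "q_coef x n = (\<Prod>p\<in>prime_factors n. q_prime x p ^ multiplicity p n)"

definition Rfun :: "real \<Rightarrow> real \<Rightarrow> complex" where
  "Rfun x t = (\<Prod>p\<in>{p::nat. prime p \<and> real p \<le> x}.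
       inverse (1 - complex_of_real (q_prime x p) * (of_nat p) powr (\<i> * complex_of_real t)))"

definition zeta_trunc :: "real \<Rightarrow> real \<Rightarrow> complex" where
  "zeta_trunc y t = (\<Prod>p\<in>{p::nat. prime p \<and> real p \<le> y}.
       inverse (1 - (of_nat p) powr (- 1 - \<i> * complex_of_real t)))"

text \<open>Coefficients a_{k,y} of the Dirichlet series
  zeta(1+it;y) = sum_{k>=1} a_{k,y} k^{-it}: a_{k,y} = 1/k if every prime factor
  of k is at most y, and 0 otherwise (a_{0,y} := 0 as a convention for indexing).\<close>
definition a_coef :: "real \<Rightarrow> nat \<Rightarrow> real" where
  "a_coef y k = (if k \<ge> 1 \<and> (\<forall>p\<in>prime_factors k. real p \<le> y) then 1 / real k else 0)"

end

theory Submission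
  imports Defs "HOL-Probability.Probability" "HOL-Library.Nat_Bijection"
begin

(* Expanding the Euler products, |R(t)|^2 and zeta(1+it;y) |R(t)|^2 become absolutely convergent
   series sum_j c_j e^(i t w_j) with c_j >= 0, the frequencies being log n - log n' and
   log n - log n' - log k. Summing against Phi(l/N) over l turns each frequency into a value of
   Theta(theta) = sum_l Phi(l/N) e^(i l theta), and Theta is real and nonnegative: Phi(a/N) is, up to a
   constant, the autocorrelation of g(u) = exp(-u^2/N^2), so periodizing over the integers gives
   Theta(theta) proportional to the integral over [0,1] of |sum_l g(u+l) e^(i l theta)|^2.
   The first bound keeps only the diagonal term n = n' = 1 and uses Theta(0) >= sqrt(2 pi) N, which is
   Cauchy-Schwarz on [0,1] since the periodization of g has integral N sqrt pi over [0,1].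
   For the second, (m, n, n') |-> (m, mn, n') with m x-smooth embeds the product of sum_m q_m/m and
   the first sum into the second: a_(m,y) q_mn q_n' = (q_m/m) q_n q_n' for x <= y, and the frequency
   log mn - log n' - log m equals log n - log n'. Neither alpha > 0 nor the particular value of x is
   needed. *)

lemma infsum_complex_of_real:
  "f summable_on A \<Longrightarrow> (\<Sum>\<^sub>\<infinity>j\<in>A. complex_of_real (f j)) = complex_of_real (infsum f A)"
  by (rule infsumI, rule has_sum_of_real, rule has_sum_infsum)

lemma summable_on_times_nonneg:
  fixes f :: "'a \<Rightarrow> real" and g :: "'b \<Rightarrow> real"
  assumes fn: "\<And>a. a \<in> A \<Longrightarrow> 0 \<le> f a" and fs: "f summable_on A"
    and gn: "\<And>b. b \<in> B \<Longrightarrow> 0 \<le> g b" and gs: "g summable_on B"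
  shows "(\<lambda>(a,b). f a * g b) summable_on A \<times> B"
proof (rule nonneg_bdd_above_summable_on)
  show "\<And>x. x \<in> A \<times> B \<Longrightarrow> 0 \<le> (case x of (a, b) \<Rightarrow> f a * g b)"
    using fn gn by auto
  show "bdd_above (sum (\<lambda>(a,b). f a * g b) ` {F. F \<subseteq> A \<times> B \<and> finite F})"
  proof (rule bdd_aboveI2)
    fix F assume "F \<in> {F. F \<subseteq> A \<times> B \<and> finite F}"
    hence F: "F \<subseteq> A \<times> B" "finite F" by auto
    have sub: "F \<subseteq> fst ` F \<times> snd ` F" by force
    have fa: "fst ` F \<subseteq> A" "snd ` F \<subseteq> B" using F by auto
    have "sum (\<lambda>(a,b). f a * g b) F \<le> sum (\<lambda>(a,b). f a * g b) (fst ` F \<times> snd ` F)"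
      by (rule sum_mono2[OF _ sub]) (use F fa fn gn in \<open>auto intro!: mult_nonneg_nonneg\<close>)
    also have "\<dots> = (\<Sum>a\<in>fst ` F. f a) * (\<Sum>b\<in>snd ` F. g b)"
      by (simp add: sum_product sum.cartesian_product)
    also have "\<dots> \<le> infsum f A * infsum g B"
    proof (rule mult_mono)
      show "(\<Sum>a\<in>fst ` F. f a) \<le> infsum f A"
        by (rule finite_sum_le_infsum) (use fs F fa fn in auto)
      show "(\<Sum>b\<in>snd ` F. g b) \<le> infsum g B"
        by (rule finite_sum_le_infsum) (use gs F fa gn in auto)
      show "0 \<le> infsum f A" using fn by (intro infsum_nonneg) auto
      show "0 \<le> (\<Sum>b\<in>snd ` F. g b)" using fa gn by (intro sum_nonneg) auto
    qed
    finally show "sum (\<lambda>(a,b). f a * g b) F \<le> infsum f A * infsum g B" .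
  qed
qed

lemma infsum_Times_mult:
  fixes f :: "'a \<Rightarrow> 'c::{banach, real_normed_field}" and g :: "'b \<Rightarrow> 'c"
  assumes "(\<lambda>(a,b). f a * g b) summable_on A \<times> B"
  shows "(\<Sum>\<^sub>\<infinity>(a,b)\<in>A \<times> B. f a * g b) = infsum f A * infsum g B"
proof -
  have "(\<Sum>\<^sub>\<infinity>(a,b)\<in>A \<times> B. f a * g b) = (\<Sum>\<^sub>\<infinity>a\<in>A. \<Sum>\<^sub>\<infinity>b\<in>B. f a * g b)"
    using infsum_Sigma'_banach[of "\<lambda>a b. f a * g b" A "\<lambda>_. B"] assms by simp
  also have "\<dots> = infsum f A * infsum g B"
    by (simp add: infsum_cmult_right' infsum_cmult_left')
  finally show ?thesis .
qed

lemma infsum_mult_le_infsum_reindex: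
  fixes f :: "'a \<Rightarrow> real" and g :: "'b \<Rightarrow> real" and h :: "'c \<Rightarrow> real"
  assumes f: "\<And>a. a \<in> A \<Longrightarrow> 0 \<le> f a" "f summable_on A"
    and g: "\<And>b. b \<in> B \<Longrightarrow> 0 \<le> g b" "g summable_on B"
    and h: "\<And>c. c \<in> C \<Longrightarrow> 0 \<le> h c" "h summable_on C"
    and inj: "inj_on \<iota> (A \<times> B)" and into: "\<iota> ` (A \<times> B) \<subseteq> C"
    and h_\<iota>: "\<And>a b. a \<in> A \<Longrightarrow> b \<in> B \<Longrightarrow> h (\<iota> (a, b)) = f a * g b"
  shows "infsum f A * infsum g B \<le> infsum h C"
proof -
  have "infsum f A * infsum g B = (\<Sum>\<^sub>\<infinity>(a,b)\<in>A \<times> B. f a * g b)"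
    by (rule infsum_Times_mult[symmetric], rule summable_on_times_nonneg[OF f g])
  also have "\<dots> = (\<Sum>\<^sub>\<infinity>z\<in>A \<times> B. (h \<circ> \<iota>) z)"
    by (intro infsum_cong) (auto simp: h_\<iota>)
  also have "\<dots> = (\<Sum>\<^sub>\<infinity>z\<in>\<iota> ` (A \<times> B). h z)"
    by (rule infsum_reindex[OF inj, symmetric])
  also have "\<dots> \<le> infsum h C"
    by (rule infsum_mono2[OF summable_on_subset_banach[OF h(2) into] h(2) into]) (use h(1) in auto)
  finally show ?thesis .
qed

lemma summable_on_prod_PiE_nonneg:
  fixes f :: "'a \<Rightarrow> 'b \<Rightarrow> real"
  assumes "finite A" "\<And>x y. x \<in> A \<Longrightarrow> y \<in> B x \<Longrightarrow> 0 \<le> f x y"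
    "\<And>x. x \<in> A \<Longrightarrow> f x summable_on B x"
  shows "(\<lambda>g. \<Prod>x\<in>A. f x (g x)) summable_on PiE A B"
  using assms
proof (induction A rule: finite_induct)
  case empty
  then show ?case by simp
next
  case (insert x F)
  have pi: "Pi\<^sub>E (insert x F) B = (\<lambda>(g,y). g(x:=y)) ` (Pi\<^sub>E F B \<times> B x)"
    unfolding PiE_insert_eq
    by (subst swap_product [symmetric]) (simp add: image_image case_prod_unfold)
  have inj: "inj_on (\<lambda>(g, y). g(x := y)) (Pi\<^sub>E F B \<times> B x)"
    using \<open>x \<notin> F\<close> by (rule inj_combinator')
  have IH: "(\<lambda>g. \<Prod>x\<in>F. f x (g x)) summable_on PiE F B"
    using insert by auto
  have prod: "(\<lambda>(g,y). (\<Prod>z\<in>F. f z (g z)) * f x y) summable_on (Pi\<^sub>E F B \<times> B x)"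
    by (rule summable_on_times_nonneg[OF _ IH])
       (use insert.prems in \<open>auto intro!: prod_nonneg simp: PiE_iff\<close>)
  have "(\<Prod>z\<in>insert x F. f z ((g(x := y)) z)) = (\<Prod>z\<in>F. f z (g z)) * f x y" for g y
  proof -
    have "(\<Prod>z\<in>F. f z ((g(x := y)) z)) = (\<Prod>z\<in>F. f z (g z))"
      using insert.hyps by (intro prod.cong) auto
    then show ?thesis using insert.hyps by (simp add: mult.commute)
  qed
  then have "((\<lambda>g. \<Prod>x\<in>insert x F. f x (g x)) \<circ> (\<lambda>(g,y). g(x:=y))) summable_on (Pi\<^sub>E F B \<times> B x)"
    using prod by (simp add: o_def case_prod_unfold)
  then have "(\<lambda>g. \<Prod>x\<in>insert x F. f x (g x)) summable_on ((\<lambda>(g,y). g(x:=y)) ` (Pi\<^sub>E F B \<times> B x))"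
    using summable_on_reindex[OF inj] by blast
  then show ?case
    using pi by simp
qed

lemma summable_on_int_power_abs:
  fixes r :: real
  assumes "0 \<le> r" "r < 1"
  shows "(\<lambda>l::int. r ^ nat \<bar>l\<bar>) summable_on UNIV"
proof -
  have nat: "(\<lambda>n::nat. r ^ n) summable_on UNIV"
    by (rule summable_nonneg_imp_summable_on) (use assms in \<open>auto intro!: summable_geometric\<close>)
  have pos: "(\<lambda>l::int. r ^ nat \<bar>l\<bar>) summable_on range int"
    using nat by (subst summable_on_reindex) (auto simp: o_def)
  have neg: "(\<lambda>l::int. r ^ nat \<bar>l\<bar>) summable_on range (\<lambda>n::nat. - int n)"
    using nat by (subst summable_on_reindex) (auto simp: o_def inj_on_def)
  have "UNIV = range int \<union> range (\<lambda>n::nat. - int n)"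
    by (auto intro: int_cases2)
  then show ?thesis
    using summable_on_union[OF pos neg] by simp
qed

lemma summable_on_int_gaussian:
  fixes c a :: real
  assumes c: "c > 0"
  shows "(\<lambda>l::int. exp (- c * (a + of_int l)^2)) summable_on UNIV"
proof (rule summable_on_comparison_test)
  let ?r = "exp (- c / 2)"
  show "(\<lambda>l::int. exp (c * a^2) * ?r ^ nat \<bar>l\<bar>) summable_on UNIV"
    using c by (intro summable_on_cmult_right summable_on_int_power_abs) auto
  fix l :: int
  show "0 \<le> exp (- c * (a + of_int l)^2)" by simp
  have "\<bar>l\<bar> \<le> l^2"
  proof (cases "l = 0")
    case False
    then have "\<bar>l\<bar> * 1 \<le> \<bar>l\<bar> * \<bar>l\<bar>" by (intro mult_left_mono) auto
    then show ?thesis by (simp add: power2_eq_square)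
  qed simp
  then have "real_of_int \<bar>l\<bar> \<le> real_of_int (l^2)" by linarith
  then have "real (nat \<bar>l\<bar>) \<le> (of_int l)^2" by simp
  moreover have "(of_int l)^2 \<le> 2 * (a + of_int l)^2 + 2 * a^2"
    using zero_le_power2[of "2 * a + of_int l"] by (simp add: power2_eq_square algebra_simps)
  ultimately have "c / 2 * real (nat \<bar>l\<bar>) \<le> c / 2 * (2 * (a + of_int l)^2 + 2 * a^2)"
    using c by (intro mult_left_mono) auto
  then have "- c * (a + of_int l)^2 \<le> c * a^2 + (- c / 2 * real (nat \<bar>l\<bar>))"
    by (simp add: algebra_simps)
  moreover have "?r ^ nat \<bar>l\<bar> = exp (- c / 2 * real (nat \<bar>l\<bar>))"
    by (simp add: exp_of_nat_mult[symmetric] mult.commute)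
  then have "exp (c * a^2) * ?r ^ nat \<bar>l\<bar> = exp (c * a^2 + (- c / 2 * real (nat \<bar>l\<bar>)))"
    by (simp only: exp_add)
  ultimately show "exp (- c * (a + of_int l)^2) \<le> exp (c * a^2) * ?r ^ nat \<bar>l\<bar>"
    by simp
qed

lemma infsum_int_as_suminf:
  fixes f :: "int \<Rightarrow> 'a::banach"
  assumes "(\<lambda>i. norm (f i)) summable_on UNIV"
  shows "summable (\<lambda>n. norm (f (int_decode n)))" and "(\<Sum>\<^sub>\<infinity>i. f i) = (\<Sum>n. f (int_decode n))"
proof -
  have bij: "bij_betw int_decode UNIV UNIV"
    by (simp add: bij_betw_def inj_int_decode surj_int_decode)
  show sm: "summable (\<lambda>n. norm (f (int_decode n)))"
    using summable_on_reindex_bij_betw[OF bij, of "\<lambda>i. norm (f i)"] assms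
    by (simp add: summable_on_imp_summable)
  have "(\<Sum>\<^sub>\<infinity>i. f i) = (\<Sum>\<^sub>\<infinity>n. f (int_decode n))"
    using infsum_reindex_bij_betw[OF bij, of f] by simp
  also have "\<dots> = (\<Sum>n. f (int_decode n))"
    by (rule infsumI, rule norm_summable_imp_has_sum[OF sm])
       (rule summable_sums, rule summable_norm_cancel[OF sm])
  finally show "(\<Sum>\<^sub>\<infinity>i. f i) = (\<Sum>n. f (int_decode n))" .
qed

section \<open>Periodization over the integers\<close>

lemma integral_infsum_int:
  fixes f :: "int \<Rightarrow> 'b \<Rightarrow> 'a::{banach, second_countable_topology}"
  assumes int: "\<And>i. integrable M (f i)"
    and summ: "\<And>x. (\<lambda>i. norm (f i x)) summable_on UNIV"
    and sums: "(\<lambda>i. (\<integral>x. norm (f i x) \<partial>M)) summable_on UNIV"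
  shows "integrable M (\<lambda>x. \<Sum>\<^sub>\<infinity>i. f i x)"
    and "(\<integral>x. (\<Sum>\<^sub>\<infinity>i. f i x) \<partial>M) = (\<Sum>\<^sub>\<infinity>i. integral\<^sup>L M (f i))"
proof -
  note pw = infsum_int_as_suminf[OF summ]
  have hint: "summable (\<lambda>n. \<integral>x. norm (f (int_decode n) x) \<partial>M)"
    using infsum_int_as_suminf(1)[of "\<lambda>i. \<integral>x. norm (f i x) \<partial>M"] sums by simp
  have hi: "integrable M (f (int_decode n))" for n by (rule int)
  have ae: "AE x in M. summable (\<lambda>n. norm (f (int_decode n) x))"
    using pw(1) by simp
  show "integrable M (\<lambda>x. \<Sum>\<^sub>\<infinity>i. f i x)"
    unfolding pw(2) using integrable_suminf[OF hi ae hint] .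
  have "(\<lambda>i. norm (integral\<^sup>L M (f i))) summable_on UNIV"
    by (rule summable_on_comparison_test[OF sums]) (auto intro: integral_norm_bound)
  then have "(\<Sum>\<^sub>\<infinity>i. integral\<^sup>L M (f i)) = (\<Sum>n. integral\<^sup>L M (f (int_decode n)))"
    by (rule infsum_int_as_suminf(2))
  then show "(\<integral>x. (\<Sum>\<^sub>\<infinity>i. f i x) \<partial>M) = (\<Sum>\<^sub>\<infinity>i. integral\<^sup>L M (f i))"
    unfolding pw(2) using integral_suminf[OF hi ae hint] by simp
qed

lemma indicator_unit_interval_scaleR:
  fixes z :: "'a::real_vector"
  shows "indicator {of_int m..<of_int m + 1} (v::real) *\<^sub>R z = (if m = \<lfloor>v\<rfloor> then z else 0)"
proof -
  have "(of_int m \<le> v \<and> v < of_int m + 1) \<longleftrightarrow> m = \<lfloor>v\<rfloor>"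
    using floor_eq_iff[of v m] by auto
  then show ?thesis by (auto simp: indicator_def)
qed

lemma has_sum_unit_interval_pieces:
  fixes z :: "'a::{real_normed_vector}"
  shows "((\<lambda>m::int. indicator {of_int m..<of_int m + 1} (v::real) *\<^sub>R z) has_sum z) UNIV"
proof -
  have "((\<lambda>m::int. if m = \<lfloor>v\<rfloor> then z else 0) has_sum z) {\<lfloor>v\<rfloor>}"
    using has_sum_finite[of "{\<lfloor>v\<rfloor>}" "\<lambda>m::int. if m = \<lfloor>v\<rfloor> then z else 0"] by simp
  then show ?thesis
    unfolding indicator_unit_interval_scaleR by (rule has_sum_cong_neutral[THEN iffD1, rotated -1]) auto
qed

lemma integral_unit_interval_shift:
  fixes H :: "real \<Rightarrow> 'a::{banach, second_countable_topology}"
  shows "(\<integral>u. indicator {0..<1} u *\<^sub>R H (u + of_int m) \<partial>lborel)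
       = (\<integral>v. indicator {of_int m..<of_int m + 1} v *\<^sub>R H v \<partial>lborel)"
  using lborel_integral_real_affine[of 1 "\<lambda>v. indicator {of_int m..<of_int m + 1} v *\<^sub>R H v" "of_int m"]
  by (simp add: indicator_def add.commute)

lemma summable_on_integral_unit_interval_pieces:
  fixes h :: "real \<Rightarrow> real"
  assumes h: "integrable lborel h" and nonneg: "\<And>v. 0 \<le> h v"
  shows "(\<lambda>m::int. \<integral>v. indicator {of_int m..<of_int m + 1} v * h v \<partial>lborel) summable_on UNIV"
proof (rule nonneg_bdd_above_summable_on)
  let ?k = "\<lambda>m::int. \<lambda>v. indicator {of_int m..<of_int m + 1} v * h v"
  show "0 \<le> (\<integral>v. ?k m v \<partial>lborel)" for m
    using nonneg by (intro Bochner_Integration.integral_nonneg) auto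
  show "bdd_above (sum (\<lambda>m. \<integral>v. ?k m v \<partial>lborel) ` {F. F \<subseteq> UNIV \<and> finite F})"
  proof (rule bdd_aboveI2)
    fix F :: "int set"
    assume "F \<in> {F. F \<subseteq> UNIV \<and> finite F}"
    then have F: "finite F" by simp
    have kint: "integrable lborel (?k m)" for m
      using integrable_mult_indicator[OF _ h] by simp
    have "(\<Sum>m\<in>F. \<integral>v. ?k m v \<partial>lborel) = (\<integral>v. (\<Sum>m\<in>F. ?k m v) \<partial>lborel)"
      by (rule Bochner_Integration.integral_sum[symmetric]) (rule kint)
    also have "\<dots> \<le> (\<integral>v. h v \<partial>lborel)"
    proof (rule Bochner_Integration.integral_mono)
      show "integrable lborel (\<lambda>v. \<Sum>m\<in>F. ?k m v)"
        by (intro Bochner_Integration.integrable_sum kint)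
      fix v
      have "(\<Sum>m\<in>F. ?k m v) = (\<Sum>m\<in>F. if m = \<lfloor>v\<rfloor> then h v else 0)"
        using indicator_unit_interval_scaleR[of _ v "h v"] by (intro sum.cong) auto
      also have "\<dots> \<le> h v"
        using F nonneg by (simp add: sum.delta)
      finally show "(\<Sum>m\<in>F. ?k m v) \<le> h v" .
    qed (rule h)
    finally show "(\<Sum>m\<in>F. \<integral>v. ?k m v \<partial>lborel) \<le> (\<integral>v. h v \<partial>lborel)" .
  qed
qed

lemma integral_periodization:
  fixes H :: "real \<Rightarrow> 'a::{banach, second_countable_topology}"
  assumes H: "integrable lborel H"
    and summ: "\<And>u. (\<lambda>m::int. norm (H (u + of_int m))) summable_on UNIV"
  shows "integrable lborel (\<lambda>u. indicator {0..<1} u *\<^sub>R (\<Sum>\<^sub>\<infinity>m::int. H (u + of_int m)))"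
    and "(\<integral>u. indicator {0..<1} u *\<^sub>R (\<Sum>\<^sub>\<infinity>m::int. H (u + of_int m)) \<partial>lborel) = integral\<^sup>L lborel H"
proof -
  \<comment> \<open>both sides are \<open>\<Sum>m. \<integral>[m,m+1) H\<close>: the pieces \<open>k m\<close> tile \<open>H\<close>, and \<open>f m\<close> is \<open>k m\<close> shifted to \<open>[0,1)\<close>\<close>
  define k where "k m v = indicator {of_int m..<of_int m + 1} v *\<^sub>R H v" for m :: int and v
  define f where "f m u = indicator {0..<1} u *\<^sub>R H (u + of_int m)" for m :: int and u
  have kint: "integrable lborel (k m)" for m
    unfolding k_def using integrable_mult_indicator[OF _ H] by simp
  have fint: "integrable lborel (f m)" for m
    unfolding f_def using lborel_integrable_real_affine[OF H, of 1 "of_int m"]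
    by (intro integrable_mult_indicator) (auto simp: add.commute)
  have fk: "integral\<^sup>L lborel (f m) = integral\<^sup>L lborel (k m)" for m
    unfolding f_def k_def by (rule integral_unit_interval_shift)
  have norm_fk: "(\<integral>u. norm (f m u) \<partial>lborel) = (\<integral>v. indicator {of_int m..<of_int m + 1} v * norm (H v) \<partial>lborel)" for m
    using integral_unit_interval_shift[of "\<lambda>v. norm (H v)" m]
    unfolding f_def by (simp add: indicator_def)
  have fsum: "(\<lambda>m. \<integral>u. norm (f m u) \<partial>lborel) summable_on UNIV"
    unfolding norm_fk using H by (intro summable_on_integral_unit_interval_pieces) auto
  have fpw: "(\<lambda>m. norm (f m u)) summable_on UNIV" for u
    using summ[of u] by (cases "u \<in> {0..<1}") (simp_all add: f_def)
  have fval: "(\<Sum>\<^sub>\<infinity>m. f m u) = indicator {0..<1} u *\<^sub>R (\<Sum>\<^sub>\<infinity>m::int. H (u + of_int m))" for u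
    unfolding f_def by (cases "u \<in> {0..<1}") auto
  have kpw: "(\<lambda>m. norm (k m v)) summable_on UNIV" and kval: "(\<Sum>\<^sub>\<infinity>m. k m v) = H v" for v
    using has_sum_unit_interval_pieces[of v "norm (H v)"] has_sum_unit_interval_pieces[of v "H v"]
    unfolding k_def by (auto simp: indicator_def summable_on_def infsumI)
  note F = integral_infsum_int[of lborel f, OF fint fpw fsum]
  have ksum: "(\<lambda>m. \<integral>v. norm (k m v) \<partial>lborel) summable_on UNIV"
    using fsum unfolding norm_fk k_def by (simp add: indicator_def)
  note K = integral_infsum_int[of lborel k, OF kint kpw ksum]
  show "integrable lborel (\<lambda>u. indicator {0..<1} u *\<^sub>R (\<Sum>\<^sub>\<infinity>m::int. H (u + of_int m)))"
    using F(1) by (simp add: fval)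
  show "(\<integral>u. indicator {0..<1} u *\<^sub>R (\<Sum>\<^sub>\<infinity>m::int. H (u + of_int m)) \<partial>lborel) = integral\<^sup>L lborel H"
    using F(2) K(2) by (simp add: fval fk kval)
qed

lemma square_integral_unit_interval_le:
  fixes f :: "real \<Rightarrow> real"
  assumes f: "integrable lborel (\<lambda>u. indicator {0..<1} u * f u)"
    and f2: "integrable lborel (\<lambda>u. indicator {0..<1} u * (f u)^2)"
  shows "(\<integral>u. indicator {0..<1} u * f u \<partial>lborel)^2 \<le> (\<integral>u. indicator {0..<1} u * (f u)^2 \<partial>lborel)"
proof -
  define a where "a = (\<integral>u. indicator {0..<1} u * f u \<partial>lborel)"
  have ind: "integrable lborel (indicator {0..<1::real} :: real \<Rightarrow> real)" by simp
  have "0 \<le> (\<integral>u. indicator {0..<1} u * (f u - a)^2 \<partial>lborel)"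
    by (intro Bochner_Integration.integral_nonneg) auto
  also have "\<dots> = (\<integral>u. indicator {0..<1} u * (f u)^2 - 2 * a * (indicator {0..<1} u * f u)
      + a^2 * indicator {0..<1} u \<partial>lborel)"
    by (intro Bochner_Integration.integral_cong) (auto simp: power2_eq_square algebra_simps)
  also have "\<dots> = (\<integral>u. indicator {0..<1} u * (f u)^2 \<partial>lborel) - a^2"
    using f f2 ind by (simp add: a_def power2_eq_square)
  finally show ?thesis by (simp add: a_def)
qed

section \<open>The Gaussian theta series\<close>

definition gauss :: "real \<Rightarrow> real \<Rightarrow> real" where
  "gauss s u = exp (- (u^2) / s^2)"

lemma summable_on_gauss_shifts: "s > 0 \<Longrightarrow> (\<lambda>l::int. gauss s (u + of_int l)) summable_on UNIV"
  using summable_on_int_gaussian[of "1 / s^2" u] by (simp add: gauss_def)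

lemma summable_on_Phi_int: "s > 0 \<Longrightarrow> (\<lambda>l::int. Phi (of_int l / s)) summable_on UNIV"
  using summable_on_int_gaussian[of "1 / (2 * s^2)" 0] by (simp add: Phi_def power_divide mult.commute)

lemma has_bochner_integral_gauss:
  assumes s: "s > 0"
  shows "has_bochner_integral lborel (gauss s) (s * sqrt pi)"
proof -
  have "has_bochner_integral lborel (normal_density 0 (s / sqrt 2)) 1"
    using has_bochner_integral_integrable[OF integrable_normal_density[of "s / sqrt 2" 0]] s by simp
  then have "has_bochner_integral lborel (\<lambda>u. (s * sqrt pi) * normal_density 0 (s / sqrt 2) u) ((s * sqrt pi) * 1)"
    by (rule has_bochner_integral_mult_right)
  moreover have "(s * sqrt pi) * normal_density 0 (s / sqrt 2) u = gauss s u" for u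
  proof -
    have "2 * pi * (s / sqrt 2)^2 = pi * s^2" by (simp add: power_divide)
    then have "sqrt (2 * pi * (s / sqrt 2)^2) = s * sqrt pi"
      using s by (simp add: real_sqrt_mult)
    then show ?thesis
      unfolding normal_density_def gauss_def using s by (simp add: power_divide)
  qed
  ultimately show ?thesis by simp
qed

lemma has_bochner_integral_gauss_mult_shift:
  assumes s: "s > 0"
  shows "has_bochner_integral lborel (\<lambda>u. gauss s u * gauss s (u + a)) (s * sqrt (pi/2) * Phi (a/s))"
proof -
  have "has_bochner_integral lborel (normal_density (-a/2) (s/2)) 1"
    using has_bochner_integral_integrable[OF integrable_normal_density[of "s/2" "-a/2"]] s by simp
  then have "has_bochner_integral lborel (\<lambda>u. (s * sqrt (pi/2) * Phi (a/s)) * normal_density (-a/2) (s/2) u)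
      ((s * sqrt (pi/2) * Phi (a/s)) * 1)"
    by (rule has_bochner_integral_mult_right)
  moreover have "(s * sqrt (pi/2) * Phi (a/s)) * normal_density (-a/2) (s/2) u = gauss s u * gauss s (u + a)" for u
  proof -
    have "2 * pi * (s/2)^2 = (pi/2) * s^2" by (simp add: power2_eq_square)
    then have "sqrt (2 * pi * (s/2)^2) = sqrt (pi/2) * sqrt (s^2)"
      by (simp only: real_sqrt_mult)
    then have sq: "sqrt (2 * pi * (s/2)^2) = s * sqrt (pi/2)"
      using s by simp
    \<comment> \<open>completing the square in \<open>u\<close>\<close>
    have "(- ((a/s)^2)/2) + (- ((u + a / 2)^2) / (2 * (s / 2)^2)) = (- (u^2)/s^2) + (- ((u+a)^2)/s^2)"
      using s by (simp add: field_simps power2_eq_square)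
    then show ?thesis
      unfolding normal_density_def sq Phi_def gauss_def using s by (simp add: exp_add[symmetric])
  qed
  ultimately show ?thesis by simp
qed

definition theta :: "real \<Rightarrow> real \<Rightarrow> complex" where
  "theta s \<theta> = (\<Sum>\<^sub>\<infinity>l::int. complex_of_real (Phi (of_int l / s)) * cis (of_int l * \<theta>))"

definition gauss_wrap :: "real \<Rightarrow> real \<Rightarrow> real \<Rightarrow> complex" where
  "gauss_wrap s \<theta> u = (\<Sum>\<^sub>\<infinity>l::int. complex_of_real (gauss s (u + of_int l)) * cis (of_int l * \<theta>))"

lemma gauss_wrap_shift: "gauss_wrap s \<theta> (u + of_int m) = cis (- (of_int m * \<theta>)) * gauss_wrap s \<theta> u"
proof -
  have bij: "bij_betw (\<lambda>l. l + m) UNIV (UNIV::int set)"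
    by (rule bij_betwI[where g="\<lambda>k. k - m"]) auto
  have "gauss_wrap s \<theta> (u + of_int m)
      = (\<Sum>\<^sub>\<infinity>l::int. (\<lambda>k. complex_of_real (gauss s (u + of_int k)) * cis (of_int (k - m) * \<theta>)) (l + m))"
    unfolding gauss_wrap_def by (intro infsum_cong) (simp add: ac_simps)
  also have "\<dots> = (\<Sum>\<^sub>\<infinity>k::int. complex_of_real (gauss s (u + of_int k)) * cis (of_int (k - m) * \<theta>))"
    by (rule infsum_reindex_bij_betw[OF bij])
  also have "\<dots> = (\<Sum>\<^sub>\<infinity>k::int. cis (- (of_int m * \<theta>)) * (complex_of_real (gauss s (u + of_int k)) * cis (of_int k * \<theta>)))"
    by (intro infsum_cong) (simp add: cis_mult algebra_simps)
  also have "\<dots> = cis (- (of_int m * \<theta>)) * gauss_wrap s \<theta> u"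
    unfolding gauss_wrap_def by (rule infsum_cmult_right')
  finally show ?thesis .
qed

lemma integral_gauss_mult_wrap:
  assumes s: "s > 0"
  shows "integrable lborel (\<lambda>u. complex_of_real (gauss s u) * gauss_wrap s \<theta> u)"
    and "(\<integral>u. complex_of_real (gauss s u) * gauss_wrap s \<theta> u \<partial>lborel)
           = complex_of_real (s * sqrt (pi/2)) * theta s \<theta>"
proof -
  define f where "f l = (\<lambda>u. complex_of_real (gauss s u * gauss s (u + of_int l)) * cis (of_int l * \<theta>))"
    for l :: int
  note gg = has_bochner_integral_gauss_mult_shift[OF s]
  have fint: "integrable lborel (f l)" for l
    unfolding f_def using gg[THEN integrable.intros] by (intro integrable_mult_left integrable_of_real)
  have norm_f: "norm (f l u) = gauss s u * gauss s (u + of_int l)" for l u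
    unfolding f_def by (simp add: norm_mult abs_mult gauss_def)
  have fpw: "(\<lambda>l. norm (f l u)) summable_on UNIV" for u
    unfolding norm_f by (intro summable_on_cmult_right summable_on_gauss_shifts s)
  have fsum: "(\<lambda>l. \<integral>u. norm (f l u) \<partial>lborel) summable_on UNIV"
    unfolding norm_f using s gg[THEN has_bochner_integral_integral_eq]
    by (simp add: summable_on_cmult_right summable_on_Phi_int)
  have pw: "(\<Sum>\<^sub>\<infinity>l. f l u) = complex_of_real (gauss s u) * gauss_wrap s \<theta> u" for u
    unfolding f_def gauss_wrap_def by (subst infsum_cmult_right'[symmetric]) (simp add: mult.assoc)
  have intf: "integral\<^sup>L lborel (f l)
      = complex_of_real (s * sqrt (pi/2)) * (complex_of_real (Phi (of_int l / s)) * cis (of_int l * \<theta>))" for l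
  proof -
    have "integral\<^sup>L lborel (f l)
        = (\<integral>u. complex_of_real (gauss s u * gauss s (u + of_int l)) \<partial>lborel) * cis (of_int l * \<theta>)"
      unfolding f_def by (rule integral_mult_left_zero)
    also have "\<dots> = complex_of_real (s * sqrt (pi/2) * Phi (of_int l / s)) * cis (of_int l * \<theta>)"
      by (simp only: integral_complex_of_real gg[THEN has_bochner_integral_integral_eq])
    finally show ?thesis by simp
  qed
  note I = integral_infsum_int[of lborel f, OF fint fpw fsum]
  show "integrable lborel (\<lambda>u. complex_of_real (gauss s u) * gauss_wrap s \<theta> u)"
    using I(1) by (simp add: pw)
  show "(\<integral>u. complex_of_real (gauss s u) * gauss_wrap s \<theta> u \<partial>lborel)
      = complex_of_real (s * sqrt (pi/2)) * theta s \<theta>"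
    using I(2) by (simp add: pw intf theta_def infsum_cmult_right')
qed

lemma theta_eq_integral_wrap:
  assumes s: "s > 0"
  shows "integrable lborel (\<lambda>u. indicator {0..<1} u * (cmod (gauss_wrap s \<theta> u))^2)"
    and "theta s \<theta>
           = complex_of_real ((\<integral>u. indicator {0..<1} u * (cmod (gauss_wrap s \<theta> u))^2 \<partial>lborel) / (s * sqrt (pi/2)))"
proof -
  define H where "H u = complex_of_real (gauss s u) * gauss_wrap s \<theta> u" for u
  note I = integral_gauss_mult_wrap[OF s, of \<theta>, folded H_def]
  have norm_H: "norm (H (u + of_int m)) = gauss s (u + of_int m) * norm (gauss_wrap s \<theta> u)" for u m
    unfolding H_def gauss_wrap_shift by (simp add: norm_mult gauss_def)
  have Hpw: "(\<lambda>m. norm (H (u + of_int m))) summable_on UNIV" for u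
    unfolding norm_H by (intro summable_on_cmult_left summable_on_gauss_shifts s)
  \<comment> \<open>the periodization of \<open>H\<close> is \<open>|gauss_wrap|^2\<close> since \<open>gauss_wrap s \<theta> u\<close> is \<open>1\<close>-quasiperiodic\<close>
  have cnj_wrap: "cnj (gauss_wrap s \<theta> u)
      = (\<Sum>\<^sub>\<infinity>m::int. complex_of_real (gauss s (u + of_int m)) * cis (- (of_int m * \<theta>)))" for u
    unfolding gauss_wrap_def infsum_cnj[symmetric] by (intro infsum_cong) (simp add: cis_cnj)
  have Hsum: "(\<Sum>\<^sub>\<infinity>m::int. H (u + of_int m)) = complex_of_real ((cmod (gauss_wrap s \<theta> u))^2)" for u
  proof -
    have "(\<Sum>\<^sub>\<infinity>m::int. H (u + of_int m))
        = (\<Sum>\<^sub>\<infinity>m::int. complex_of_real (gauss s (u + of_int m)) * cis (- (of_int m * \<theta>)) * gauss_wrap s \<theta> u)"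
      unfolding H_def gauss_wrap_shift by (intro infsum_cong) (simp add: mult.assoc)
    also have "\<dots> = cnj (gauss_wrap s \<theta> u) * gauss_wrap s \<theta> u"
      unfolding cnj_wrap by (rule infsum_cmult_left')
    finally show ?thesis by (simp only: complex_norm_square mult.commute)
  qed
  have ind: "indicator {0..<1} u *\<^sub>R complex_of_real r = complex_of_real (indicator {0..<1} u * r)" for u r
    by (simp add: indicator_def)
  note P = integral_periodization[OF I(1) Hpw, unfolded Hsum ind]
  show "integrable lborel (\<lambda>u. indicator {0..<1} u * (cmod (gauss_wrap s \<theta> u))^2)"
    using integrable_Re[OF P(1)] by simp
  define J where "J = (\<integral>u. indicator {0..<1} u * (cmod (gauss_wrap s \<theta> u))^2 \<partial>lborel)"
  define C where "C = s * sqrt (pi/2)"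
  have "complex_of_real J = integral\<^sup>L lborel H"
    using P(2) unfolding J_def by (simp only: integral_complex_of_real)
  then have "theta s \<theta> * complex_of_real C = complex_of_real J"
    using I(2) unfolding C_def by (simp only: mult.commute)
  moreover have "C \<noteq> 0"
    using s by (simp add: C_def)
  ultimately show "theta s \<theta> = complex_of_real (J / C)"
    by (simp add: eq_divide_eq)
qed

lemma theta_real_nonneg:
  assumes s: "s > 0"
  shows "theta s \<theta> = complex_of_real (Re (theta s \<theta>))" and "0 \<le> Re (theta s \<theta>)"
proof -
  have "0 \<le> (\<integral>u. indicator {0..<1} u * (cmod (gauss_wrap s \<theta> u))^2 \<partial>lborel) / (s * sqrt (pi/2))"
    using s by (intro divide_nonneg_pos Bochner_Integration.integral_nonneg) auto
  then show "theta s \<theta> = complex_of_real (Re (theta s \<theta>))" and "0 \<le> Re (theta s \<theta>)"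
    using theta_eq_integral_wrap(2)[OF s, of \<theta>] by simp_all
qed

lemma Re_theta_le_sum_Phi:
  assumes s: "s > 0"
  shows "Re (theta s \<theta>) \<le> (\<Sum>\<^sub>\<infinity>l::int. Phi (of_int l / s))"
proof -
  have norm_eq: "norm (complex_of_real (Phi (of_int l / s)) * cis (of_int l * \<theta>)) = Phi (of_int l / s)" for l :: int
    by (simp add: norm_mult Phi_def)
  have "Re (theta s \<theta>) \<le> norm (theta s \<theta>)"
    by (rule complex_Re_le_cmod)
  also have "\<dots> \<le> (\<Sum>\<^sub>\<infinity>l::int. Phi (of_int l / s))"
    unfolding theta_def using norm_infsum_bound[of "\<lambda>l::int. complex_of_real (Phi (of_int l / s)) * cis (of_int l * \<theta>)" UNIV]
    by (simp add: norm_eq summable_on_Phi_int[OF s])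
  finally show ?thesis .
qed

lemma Re_theta_zero_ge:
  assumes s: "s > 0"
  shows "sqrt (2 * pi) * s \<le> Re (theta s 0)"
proof -
  define S where "S u = (\<Sum>\<^sub>\<infinity>l::int. gauss s (u + of_int l))" for u
  have "gauss_wrap s 0 u = complex_of_real (S u)" for u
    unfolding gauss_wrap_def S_def using summable_on_gauss_shifts[OF s] by (simp add: infsum_complex_of_real)
  moreover have "S u \<ge> 0" for u
    unfolding S_def by (intro infsum_nonneg) (simp add: gauss_def)
  ultimately have wrap0: "cmod (gauss_wrap s 0 u) = S u" for u
    by simp
  note T = theta_eq_integral_wrap[OF s, of 0, unfolded wrap0]
  note G = has_bochner_integral_gauss[OF s]
  have gpw: "(\<lambda>m. norm (gauss s (u + of_int m))) summable_on UNIV" for u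
    using summable_on_gauss_shifts[OF s, of u] by (simp add: gauss_def)
  note P = integral_periodization[OF integrable.intros[OF G] gpw, folded S_def]
  define J where "J = (\<integral>u. indicator {0..<1} u * (S u)^2 \<partial>lborel)"
  have "(\<integral>u. indicator {0..<1} u * S u \<partial>lborel) = s * sqrt pi"
    using P(2) G by (simp add: has_bochner_integral_integral_eq)
  then have "(s * sqrt pi)^2 \<le> J"
    using square_integral_unit_interval_le[of S] P(1) T(1) unfolding J_def by simp
  moreover have "(s * sqrt pi)^2 = sqrt (2 * pi) * s * (s * sqrt (pi/2))"
    by (simp add: power2_eq_square real_sqrt_mult[symmetric] algebra_simps)
  ultimately have "sqrt (2 * pi) * s \<le> J / (s * sqrt (pi/2))"
    using s by (simp add: pos_le_divide_eq)
  also have "\<dots> = Re (theta s 0)"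
    using T(2) unfolding J_def by simp
  finally show ?thesis .
qed

lemma exp_series_mult:
  fixes a :: "'a \<Rightarrow> real" and b :: "'b \<Rightarrow> real"
  assumes a: "\<And>i. i \<in> A \<Longrightarrow> 0 \<le> a i" "a summable_on A"
    and b: "\<And>j. j \<in> B \<Longrightarrow> 0 \<le> b j" "b summable_on B"
  shows "(\<Sum>\<^sub>\<infinity>i\<in>A. complex_of_real (a i) * cis (t * u i)) * (\<Sum>\<^sub>\<infinity>j\<in>B. complex_of_real (b j) * cis (t * v j))
       = (\<Sum>\<^sub>\<infinity>(i,j)\<in>A \<times> B. complex_of_real (a i * b j) * cis (t * (u i + v j)))"
proof -
  let ?f = "\<lambda>i. complex_of_real (a i) * cis (t * u i)" and ?g = "\<lambda>j. complex_of_real (b j) * cis (t * v j)"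
  have "(\<lambda>(i,j). a i * b j) summable_on A \<times> B"
    by (rule summable_on_times_nonneg[OF a b])
  then have "(\<lambda>(i,j). ?f i * ?g j) summable_on A \<times> B"
  proof (rule abs_summable_summable[OF summable_on_cong[THEN iffD1, rotated]])
    show "(case z of (i, j) \<Rightarrow> a i * b j) = norm (case z of (i, j) \<Rightarrow> ?f i * ?g j)" if "z \<in> A \<times> B" for z
      using that a(1) b(1) by (auto simp: norm_mult)
  qed
  then have "infsum ?f A * infsum ?g B = (\<Sum>\<^sub>\<infinity>(i,j)\<in>A \<times> B. ?f i * ?g j)"
    by (rule infsum_Times_mult[symmetric])
  also have "\<dots> = (\<Sum>\<^sub>\<infinity>(i,j)\<in>A \<times> B. complex_of_real (a i * b j) * cis (t * (u i + v j)))"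
    by (intro infsum_cong) (auto simp: cis_mult algebra_simps)
  finally show ?thesis .
qed

lemma has_sum_exp_series_Phi:
  fixes c \<omega> :: "'j \<Rightarrow> real"
  assumes s: "s > 0" and c: "\<And>j. j \<in> J \<Longrightarrow> 0 \<le> c j" "c summable_on J"
  shows "((\<lambda>l::int. (\<Sum>\<^sub>\<infinity>j\<in>J. complex_of_real (c j) * cis (\<alpha> * of_int l * \<omega> j))
            * complex_of_real (Phi (of_int l / s)))
          has_sum complex_of_real (\<Sum>\<^sub>\<infinity>j\<in>J. c j * Re (theta s (\<alpha> * \<omega> j)))) UNIV"
    and "(\<lambda>j. c j * Re (theta s (\<alpha> * \<omega> j))) summable_on J"
proof -
  define G where "G l j = complex_of_real (c j) * cis (\<alpha> * of_int l * \<omega> j) * complex_of_real (Phi (of_int l / s))"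
    for l :: int and j
  have norm_G: "norm (G l j) = Phi (of_int l / s) * c j" if "j \<in> J" for l j
    using c(1)[OF that] unfolding G_def by (simp add: norm_mult Phi_def)
  have Phi_c: "(\<lambda>(l,j). Phi (of_int l / s) * c j) summable_on UNIV \<times> J"
    by (rule summable_on_times_nonneg) (use c summable_on_Phi_int[OF s] in \<open>auto simp: Phi_def\<close>)
  have sumG: "(\<lambda>(l,j). G l j) summable_on UNIV \<times> J"
  proof (rule abs_summable_summable)
    show "(\<lambda>z. norm (case z of (l,j) \<Rightarrow> G l j)) summable_on UNIV \<times> J"
      using Phi_c by (rule summable_on_cong[THEN iffD1, rotated]) (auto simp: norm_G)
  qed
  show sm: "(\<lambda>j. c j * Re (theta s (\<alpha> * \<omega> j))) summable_on J"
  proof (rule summable_on_comparison_test)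
    show "(\<lambda>j. c j * (\<Sum>\<^sub>\<infinity>l::int. Phi (of_int l / s))) summable_on J"
      by (rule summable_on_cmult_left[OF c(2)])
    fix j assume j: "j \<in> J"
    show "c j * Re (theta s (\<alpha> * \<omega> j)) \<le> c j * (\<Sum>\<^sub>\<infinity>l::int. Phi (of_int l / s))"
      using Re_theta_le_sum_Phi[OF s] c(1)[OF j] by (intro mult_left_mono) auto
    show "0 \<le> c j * Re (theta s (\<alpha> * \<omega> j))"
      using theta_real_nonneg(2)[OF s] c(1)[OF j] by simp
  qed
  have inner: "infsum (G l) J = (\<Sum>\<^sub>\<infinity>j\<in>J. complex_of_real (c j) * cis (\<alpha> * of_int l * \<omega> j))
      * complex_of_real (Phi (of_int l / s))" for l
    unfolding G_def by (rule infsum_cmult_left')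
  have outer: "(\<Sum>\<^sub>\<infinity>l::int. G l j) = complex_of_real (c j * Re (theta s (\<alpha> * \<omega> j)))" for j
  proof -
    have "(\<Sum>\<^sub>\<infinity>l::int. G l j)
        = complex_of_real (c j) * theta s (\<alpha> * \<omega> j)"
      unfolding G_def theta_def infsum_cmult_right'[symmetric] by (intro infsum_cong) (simp add: mult_ac)
    then show ?thesis
      by (subst (asm) theta_real_nonneg(1)[OF s]) simp
  qed
  have sum_l: "(\<lambda>l. infsum (G l) J) summable_on UNIV"
    using summable_on_Sigma_banach[of G UNIV "\<lambda>_. J"] sumG by simp
  have "(\<Sum>\<^sub>\<infinity>l::int. infsum (G l) J) = (\<Sum>\<^sub>\<infinity>j\<in>J. \<Sum>\<^sub>\<infinity>l::int. G l j)"
    using infsum_swap_banach[of G UNIV J] sumG by simp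
  also have "\<dots> = complex_of_real (\<Sum>\<^sub>\<infinity>j\<in>J. c j * Re (theta s (\<alpha> * \<omega> j)))"
    by (simp only: outer infsum_complex_of_real[OF sm])
  finally show "((\<lambda>l::int. (\<Sum>\<^sub>\<infinity>j\<in>J. complex_of_real (c j) * cis (\<alpha> * of_int l * \<omega> j))
            * complex_of_real (Phi (of_int l / s)))
          has_sum complex_of_real (\<Sum>\<^sub>\<infinity>j\<in>J. c j * Re (theta s (\<alpha> * \<omega> j)))) UNIV"
    using has_sum_infsum[OF sum_l] unfolding inner by simp
qed

section \<open>Euler products\<close>

definition primes_upto :: "real \<Rightarrow> nat set" where
  "primes_upto x = {p. prime p \<and> real p \<le> x}"

text \<open>A vector \<open>e \<in> exponent_vectors A\<close> over a set \<open>A\<close> of primes encodes \<open>n = \<Prod>p\<in>A. p ^ e p\<close>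
  (this is \<open>vector_value A e\<close>); then \<open>vector_weight A r e\<close> is the value at \<open>n\<close> of the completely
  multiplicative function with \<open>r\<close> at the primes, and \<open>vector_log A e = ln n\<close>.\<close>

definition exponent_vectors :: "'a set \<Rightarrow> ('a \<Rightarrow> nat) set" where
  "exponent_vectors A = PiE A (\<lambda>_. UNIV)"

definition vector_weight :: "'a set \<Rightarrow> ('a \<Rightarrow> real) \<Rightarrow> ('a \<Rightarrow> nat) \<Rightarrow> real" where
  "vector_weight A r e = (\<Prod>p\<in>A. r p ^ e p)"

definition vector_log :: "nat set \<Rightarrow> (nat \<Rightarrow> nat) \<Rightarrow> real" where
  "vector_log A e = (\<Sum>p\<in>A. real (e p) * ln (real p))"

definition vector_value :: "nat set \<Rightarrow> (nat \<Rightarrow> nat) \<Rightarrow> nat" where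
  "vector_value A e = (\<Prod>p\<in>A. p ^ e p)"

abbreviation prime_vectors :: "real \<Rightarrow> (nat \<Rightarrow> nat) set" where
  "prime_vectors x \<equiv> exponent_vectors (primes_upto x)"

abbreviation q_weight :: "real \<Rightarrow> (nat \<Rightarrow> nat) \<Rightarrow> real" where
  "q_weight x \<equiv> vector_weight (primes_upto x) (q_prime x)"

abbreviation zeta_weight :: "real \<Rightarrow> (nat \<Rightarrow> nat) \<Rightarrow> real" where
  "zeta_weight y \<equiv> vector_weight (primes_upto y) (\<lambda>p. 1 / real p)"

lemma finite_primes_upto: "finite (primes_upto x)"
  by (rule finite_subset[of _ "{..nat \<lfloor>x\<rfloor>}"]) (auto simp: primes_upto_def le_nat_floor)

lemma primes_upto_mono: "x \<le> y \<Longrightarrow> primes_upto x \<subseteq> primes_upto y"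
  by (auto simp: primes_upto_def)

lemma q_prime_bounds:
  assumes "p \<in> primes_upto x"
  shows "0 \<le> q_prime x p" and "q_prime x p < 1" and "0 \<le> q_prime x p / real p" and "q_prime x p / real p < 1"
proof -
  have p: "prime p" "real p \<le> x" using assms by (auto simp: primes_upto_def)
  then have p1: "real p \<ge> 1" and x: "x > 0"
    using prime_ge_1_nat[of p] prime_gt_0_nat[of p] by auto
  show q0: "0 \<le> q_prime x p" and q1: "q_prime x p < 1"
    using p x p1 by (simp_all add: q_prime_def)
  show "0 \<le> q_prime x p / real p" using q0 p1 by simp
  have "q_prime x p / real p \<le> q_prime x p"
    using q0 p1 by (simp add: divide_le_eq mult_le_cancel_left1)
  then show "q_prime x p / real p < 1" using q1 by linarith
qed

lemma inverse_prime_bounds: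
  assumes "p \<in> primes_upto x"
  shows "0 \<le> 1 / real p" and "1 / real p < 1"
  using assms prime_ge_2_nat[of p] by (auto simp: primes_upto_def)

lemma vector_weight_nonneg: "(\<And>p. p \<in> A \<Longrightarrow> 0 \<le> r p) \<Longrightarrow> 0 \<le> vector_weight A r e"
  unfolding vector_weight_def by (intro prod_nonneg) auto

lemma summable_on_vector_weight:
  assumes "finite A" and "\<And>p. p \<in> A \<Longrightarrow> 0 \<le> r p \<and> r p < 1"
  shows "vector_weight A r summable_on exponent_vectors A"
  unfolding vector_weight_def[abs_def] exponent_vectors_def
  by (rule summable_on_prod_PiE_nonneg[where f="\<lambda>p j. r p ^ j", OF assms(1)])
     (use assms(2) in \<open>auto intro!: summable_nonneg_imp_summable_on summable_geometric\<close>)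

lemma vector_weight_mult:
  "vector_weight A (\<lambda>p. r p * r' p) e = vector_weight A r e * vector_weight A r' e"
  unfolding vector_weight_def by (simp add: power_mult_distrib prod.distrib)

lemma vector_weight_add:
  "vector_weight A r (restrict (\<lambda>p. g p + e p) A) = vector_weight A r g * vector_weight A r e"
  unfolding vector_weight_def prod.distrib[symmetric] by (intro prod.cong refl) (simp add: power_add)

lemma vector_log_add:
  "vector_log A (restrict (\<lambda>p. g p + e p) A) = vector_log A g + vector_log A e"
  unfolding vector_log_def sum.distrib[symmetric] by (intro sum.cong refl) (simp add: algebra_simps)

lemma vector_weight_extend:
  assumes "finite B" "A \<subseteq> B"
  shows "vector_weight B r (restrict (\<lambda>p. if p \<in> A then g p else 0) B) = vector_weight A r g"
  unfolding vector_weight_def using assms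
  by (subst prod.mono_neutral_right[of B A]) (auto intro!: prod.cong)

lemma vector_log_extend:
  assumes "finite B" "A \<subseteq> B"
  shows "vector_log B (restrict (\<lambda>p. if p \<in> A then g p else 0) B) = vector_log A g"
  unfolding vector_log_def using assms
  by (subst sum.mono_neutral_right[of B A]) (auto intro!: sum.cong)

lemma euler_product_expansion:
  fixes r a :: "'a \<Rightarrow> real"
  assumes fin: "finite A" and r: "\<And>p. p \<in> A \<Longrightarrow> 0 \<le> r p \<and> r p < 1"
  shows "(\<Prod>p\<in>A. inverse (1 - complex_of_real (r p) * cis (t * a p)))
       = (\<Sum>\<^sub>\<infinity>e\<in>exponent_vectors A. complex_of_real (vector_weight A r e) * cis (t * (\<Sum>p\<in>A. real (e p) * a p)))"
proof -
  define z where "z p = complex_of_real (r p) * cis (t * a p)" for p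
  have norm_z: "norm (z p) < 1" if "p \<in> A" for p
    using r[OF that] by (simp add: z_def norm_mult)
  have "(\<Prod>p\<in>A. inverse (1 - z p)) = (\<Prod>p\<in>A. \<Sum>\<^sub>\<infinity>j. z p ^ j)"
  proof (rule prod.cong)
    fix p assume "p \<in> A"
    then have "((\<lambda>j. z p ^ j) has_sum (1 / (1 - z p))) UNIV"
      using norm_z by (intro norm_summable_imp_has_sum geometric_sums)
        (simp_all add: norm_power summable_geometric)
    then show "inverse (1 - z p) = (\<Sum>\<^sub>\<infinity>j. z p ^ j)"
      by (simp add: infsumI inverse_eq_divide)
  qed simp
  also have "\<dots> = (\<Sum>\<^sub>\<infinity>e\<in>exponent_vectors A. \<Prod>p\<in>A. z p ^ e p)"
    unfolding exponent_vectors_def using norm_z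
    by (intro infsum_prod_PiE_abs[OF fin, symmetric])
       (auto simp: norm_power intro!: summable_nonneg_imp_summable_on summable_geometric)
  also have "\<dots> = (\<Sum>\<^sub>\<infinity>e\<in>exponent_vectors A. complex_of_real (vector_weight A r e) * cis (t * (\<Sum>p\<in>A. real (e p) * a p)))"
  proof (rule infsum_cong)
    fix e
    have "(\<Prod>p\<in>A. z p ^ e p) = (\<Prod>p\<in>A. complex_of_real (r p ^ e p) * cis (real (e p) * (t * a p)))"
      unfolding z_def by (intro prod.cong) (simp_all add: power_mult_distrib Complex.DeMoivre)
    also have "\<dots> = complex_of_real (vector_weight A r e) * cis (t * (\<Sum>p\<in>A. real (e p) * a p))"
      using fin by (simp add: prod.distrib vector_weight_def cis_conv_exp exp_sum[symmetric]
          sum_distrib_left sum_distrib_right mult_ac)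
    finally show "(\<Prod>p\<in>A. z p ^ e p) = complex_of_real (vector_weight A r e) * cis (t * (\<Sum>p\<in>A. real (e p) * a p))" .
  qed
  finally show ?thesis
    by (simp add: z_def)
qed

lemma of_nat_powr_imaginary:
  "p > 0 \<Longrightarrow> (of_nat p :: complex) powr (\<i> * complex_of_real t) = cis (t * ln (real p))"
  by (simp add: powr_def cis_conv_exp mult_ac)

lemma of_nat_powr_minus_one_imaginary:
  assumes "p > 0"
  shows "(of_nat p :: complex) powr (- 1 - \<i> * complex_of_real t) = complex_of_real (1 / real p) * cis (t * - ln (real p))"
proof -
  have "(of_nat p :: complex) powr (- 1 - \<i> * complex_of_real t)
      = exp (- complex_of_real (ln (real p))) * exp (\<i> * complex_of_real (t * - ln (real p)))"
    using assms by (simp add: powr_def exp_add[symmetric] algebra_simps)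
  also have "exp (- complex_of_real (ln (real p))) = complex_of_real (1 / real p)"
    using assms by (simp add: exp_minus exp_of_real inverse_eq_divide)
  finally show ?thesis by (simp add: cis_conv_exp)
qed

lemma summable_on_q_weight: "q_weight x summable_on prime_vectors x"
  by (rule summable_on_vector_weight[OF finite_primes_upto]) (use q_prime_bounds in auto)

lemma summable_on_zeta_weight: "zeta_weight y summable_on prime_vectors y"
  by (rule summable_on_vector_weight[OF finite_primes_upto]) (use inverse_prime_bounds in auto)

lemma q_weight_nonneg: "0 \<le> q_weight x e"
  by (rule vector_weight_nonneg) (use q_prime_bounds in auto)

lemma zeta_weight_nonneg: "0 \<le> zeta_weight y e"
  by (rule vector_weight_nonneg) simp

lemma Rfun_expansion:
  "Rfun x t = (\<Sum>\<^sub>\<infinity>e\<in>prime_vectors x. complex_of_real (q_weight x e) * cis (t * vector_log (primes_upto x) e))"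
proof -
  have "Rfun x t = (\<Prod>p\<in>primes_upto x. inverse (1 - complex_of_real (q_prime x p) * cis (t * ln (real p))))"
    unfolding Rfun_def primes_upto_def[symmetric]
    by (intro prod.cong) (auto simp: of_nat_powr_imaginary primes_upto_def prime_gt_0_nat)
  also have "\<dots> = (\<Sum>\<^sub>\<infinity>e\<in>prime_vectors x. complex_of_real (q_weight x e) * cis (t * vector_log (primes_upto x) e))"
    unfolding vector_log_def by (rule euler_product_expansion[OF finite_primes_upto]) (use q_prime_bounds in auto)
  finally show ?thesis .
qed

lemma zeta_trunc_expansion:
  "zeta_trunc y t = (\<Sum>\<^sub>\<infinity>f\<in>prime_vectors y. complex_of_real (zeta_weight y f) * cis (t * - vector_log (primes_upto y) f))"
proof -
  have "zeta_trunc y t = (\<Prod>p\<in>primes_upto y. inverse (1 - complex_of_real (1 / real p) * cis (t * - ln (real p))))"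
    unfolding zeta_trunc_def primes_upto_def[symmetric]
    by (intro prod.cong) (auto simp: of_nat_powr_minus_one_imaginary primes_upto_def prime_gt_0_nat)
  also have "\<dots> = (\<Sum>\<^sub>\<infinity>f\<in>prime_vectors y. complex_of_real (zeta_weight y f) * cis (t * (\<Sum>p\<in>primes_upto y. real (f p) * - ln (real p))))"
    by (rule euler_product_expansion[OF finite_primes_upto]) (use inverse_prime_bounds in auto)
  finally show ?thesis
    by (simp add: vector_log_def sum_negf)
qed

lemma norm_Rfun_sq_expansion:
  "complex_of_real ((cmod (Rfun x t))^2)
   = (\<Sum>\<^sub>\<infinity>(e,e')\<in>prime_vectors x \<times> prime_vectors x. complex_of_real (q_weight x e * q_weight x e')
        * cis (t * (vector_log (primes_upto x) e - vector_log (primes_upto x) e')))"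
proof -
  have "cnj (Rfun x t) = (\<Sum>\<^sub>\<infinity>e\<in>prime_vectors x. complex_of_real (q_weight x e) * cis (t * - vector_log (primes_upto x) e))"
    unfolding Rfun_expansion infsum_cnj[symmetric] by (intro infsum_cong) (simp add: cis_cnj)
  then have "complex_of_real ((cmod (Rfun x t))^2)
      = (\<Sum>\<^sub>\<infinity>(e,e')\<in>prime_vectors x \<times> prime_vectors x. complex_of_real (q_weight x e * q_weight x e')
          * cis (t * (vector_log (primes_upto x) e + - vector_log (primes_upto x) e')))"
    unfolding complex_norm_square
    by (subst Rfun_expansion) (simp only: exp_series_mult q_weight_nonneg summable_on_q_weight)
  then show ?thesis by simp
qed

lemma zeta_trunc_mult_norm_Rfun_sq_expansion:
  "zeta_trunc y t * complex_of_real ((cmod (Rfun x t))^2)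
   = (\<Sum>\<^sub>\<infinity>(f,e,e')\<in>prime_vectors y \<times> (prime_vectors x \<times> prime_vectors x).
        complex_of_real (zeta_weight y f * (q_weight x e * q_weight x e'))
        * cis (t * (vector_log (primes_upto x) e - vector_log (primes_upto x) e' - vector_log (primes_upto y) f)))"
proof -
  have "(\<lambda>(e,e'). q_weight x e * q_weight x e') summable_on prime_vectors x \<times> prime_vectors x"
    by (rule summable_on_times_nonneg) (simp_all add: q_weight_nonneg summable_on_q_weight)
  then have "zeta_trunc y t * complex_of_real ((cmod (Rfun x t))^2)
     = (\<Sum>\<^sub>\<infinity>(f,j)\<in>prime_vectors y \<times> (prime_vectors x \<times> prime_vectors x).
        complex_of_real (zeta_weight y f * (case j of (e,e') \<Rightarrow> q_weight x e * q_weight x e'))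
        * cis (t * (- vector_log (primes_upto y) f
           + (case j of (e,e') \<Rightarrow> vector_log (primes_upto x) e - vector_log (primes_upto x) e'))))"
    unfolding zeta_trunc_expansion norm_Rfun_sq_expansion
    by (subst exp_series_mult[where u="\<lambda>f. - vector_log (primes_upto y) f"
          and v="\<lambda>(e,e'). vector_log (primes_upto x) e - vector_log (primes_upto x) e'"
          and b="\<lambda>(e,e'). q_weight x e * q_weight x e'", symmetric])
       (auto simp: zeta_weight_nonneg summable_on_zeta_weight q_weight_nonneg case_prod_unfold)
  also have "\<dots> = (\<Sum>\<^sub>\<infinity>(f,e,e')\<in>prime_vectors y \<times> (prime_vectors x \<times> prime_vectors x).
        complex_of_real (zeta_weight y f * (q_weight x e * q_weight x e'))
        * cis (t * (vector_log (primes_upto x) e - vector_log (primes_upto x) e' - vector_log (primes_upto y) f)))"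
    by (intro infsum_cong) (auto simp: algebra_simps)
  finally show ?thesis .
qed

lemma multiplicity_vector_value:
  assumes "finite A" "\<And>p. p \<in> A \<Longrightarrow> prime p" "prime p"
  shows "multiplicity p (vector_value A e) = (if p \<in> A then e p else 0)"
  unfolding vector_value_def by (rule multiplicity_prod_prime_powers[OF assms])

lemma vector_value_pos: "(\<And>p. p \<in> A \<Longrightarrow> prime p) \<Longrightarrow> 0 < vector_value A e"
  unfolding vector_value_def by (intro prod_pos zero_less_power) (simp add: prime_gt_0_nat)

lemma vector_weight_inverse: "vector_weight A (\<lambda>p. 1 / real p) e = 1 / real (vector_value A e)"
proof -
  have "vector_weight A (\<lambda>p. 1 / real p) e = (\<Prod>p\<in>A. 1 / real p ^ e p)"
    unfolding vector_weight_def by (intro prod.cong refl) (simp add: power_divide)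
  also have "\<dots> = (\<Prod>p\<in>A. 1) / (\<Prod>p\<in>A. real p ^ e p)"
    by (rule prod_dividef)
  finally show ?thesis
    by (simp add: vector_value_def)
qed

lemma prime_factors_vector_value:
  assumes "finite A" "\<And>p. p \<in> A \<Longrightarrow> prime p"
  shows "prime_factors (vector_value A e) = {p \<in> A. 0 < e p}"
proof -
  have "vector_value A e \<noteq> 0"
    using vector_value_pos[OF assms(2)] by simp
  show ?thesis
  proof (intro set_eqI iffI)
    fix p assume "p \<in> prime_factors (vector_value A e)"
    then have "prime p" "multiplicity p (vector_value A e) > 0"
      by (auto simp: prime_factors_multiplicity)
    then show "p \<in> {p \<in> A. 0 < e p}"
      using multiplicity_vector_value[OF assms \<open>prime p\<close>] by (simp split: if_splits)
  next
    fix p assume p: "p \<in> {p \<in> A. 0 < e p}"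
    then have "prime p" using assms(2) by simp
    then have "multiplicity p (vector_value A e) > 0"
      using multiplicity_vector_value[OF assms \<open>prime p\<close>] p by simp
    then show "p \<in> prime_factors (vector_value A e)"
      using \<open>prime p\<close> \<open>vector_value A e \<noteq> 0\<close> by (simp add: prime_factors_multiplicity)
  qed
qed

lemma inj_on_vector_value:
  assumes "finite A" "\<And>p. p \<in> A \<Longrightarrow> prime p"
  shows "inj_on (vector_value A) (exponent_vectors A)"
proof (rule inj_onI)
  fix g e assume g: "g \<in> exponent_vectors A" and e: "e \<in> exponent_vectors A"
    and eq: "vector_value A g = vector_value A e"
  have "g p = e p" if "p \<in> A" for p
    using arg_cong[OF eq, of "multiplicity p"] that
    by (simp add: multiplicity_vector_value[OF assms assms(2)[OF that]])
  then show "g = e"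
    using g e by (intro PiE_ext[of _ A "\<lambda>_. UNIV"]) (auto simp: exponent_vectors_def)
qed

lemma vector_value_image:
  assumes "finite A" "\<And>p. p \<in> A \<Longrightarrow> prime p" "k > 0" "prime_factors k \<subseteq> A"
  shows "k \<in> vector_value A ` exponent_vectors A"
proof -
  define g where "g = restrict (\<lambda>p. multiplicity p k) A"
  have "vector_value A g = (\<Prod>p\<in>A. p ^ multiplicity p k)"
    unfolding vector_value_def g_def by (intro prod.cong) auto
  also have "\<dots> = (\<Prod>p\<in>prime_factors k. p ^ multiplicity p k)"
  proof (rule prod.mono_neutral_right[OF assms(1) assms(4)])
    show "\<forall>p\<in>A - prime_factors k. p ^ multiplicity p k = 1"
      using assms(2) by (auto simp: prime_factors_multiplicity)
  qed
  also have "\<dots> = k"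
    using assms(3) prime_factorization_nat[of k] by simp
  finally have "k = vector_value A g" ..
  moreover have "g \<in> exponent_vectors A"
    by (simp add: g_def exponent_vectors_def)
  ultimately show ?thesis
    by (rule image_eqI)
qed

lemma a_coef_q_coef_vector_value:
  assumes xy: "x \<le> y" and g: "g \<in> prime_vectors x"
  shows "a_coef y (vector_value (primes_upto x) g) * q_coef x (vector_value (primes_upto x) g)
       = vector_weight (primes_upto x) (\<lambda>p. q_prime x p / real p) g"
proof -
  define k where "k = vector_value (primes_upto x) g"
  have primes: "\<And>p. p \<in> primes_upto x \<Longrightarrow> prime p"
    by (simp add: primes_upto_def)
  have pf: "prime_factors k = {p \<in> primes_upto x. 0 < g p}"
    unfolding k_def by (rule prime_factors_vector_value[OF finite_primes_upto primes])
  have "k > 0"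
    unfolding k_def using primes by (rule vector_value_pos)
  moreover have "\<forall>p\<in>prime_factors k. real p \<le> y"
    using pf xy by (auto simp: primes_upto_def)
  ultimately have a: "a_coef y k = vector_weight (primes_upto x) (\<lambda>p. 1 / real p) g"
    by (simp add: a_coef_def k_def vector_weight_inverse)
  have "q_coef x k = (\<Prod>p\<in>prime_factors k. q_prime x p ^ g p)"
    unfolding q_coef_def
  proof (rule prod.cong[OF refl])
    fix p assume "p \<in> prime_factors k"
    then have "p \<in> primes_upto x" using pf by auto
    then show "q_prime x p ^ multiplicity p k = q_prime x p ^ g p"
      unfolding k_def by (simp add: multiplicity_vector_value[OF finite_primes_upto primes primes])
  qed
  also have "\<dots> = q_weight x g"
    unfolding vector_weight_def pf by (rule prod.mono_neutral_left) (auto simp: finite_primes_upto)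
  finally have "q_coef x k = q_weight x g" .
  with a show ?thesis
    unfolding k_def[symmetric] by (simp add: vector_weight_mult[symmetric] mult.commute)
qed

lemma a_coef_q_coef_eq_0:
  assumes "k \<notin> vector_value (primes_upto x) ` prime_vectors x"
  shows "a_coef y k * q_coef x k = 0"
proof (cases "k > 0 \<and> prime_factors k \<subseteq> primes_upto x")
  case True
  then show ?thesis
    using vector_value_image[OF finite_primes_upto, of x k] assms by (auto simp: primes_upto_def)
next
  case False
  then consider "k = 0" | p where "p \<in> prime_factors k" "p \<notin> primes_upto x"
    by blast
  then show ?thesis
  proof cases
    case 1
    then show ?thesis by (simp add: a_coef_def)
  next
    case 2
    \<comment> \<open>a prime factor \<open>p > x\<close> has \<open>q_p = 0\<close>\<close>
    then have "q_prime x p ^ multiplicity p k = 0"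
      by (auto simp: q_prime_def primes_upto_def prime_factors_multiplicity)
    then have "q_coef x k = 0"
      unfolding q_coef_def using 2 by (intro prod_zero) auto
    then show ?thesis by simp
  qed
qed

lemma sums_a_coef_q_coef:
  assumes xy: "x \<le> y"
  shows "(\<lambda>k. a_coef y k * q_coef x k)
           sums (\<Sum>\<^sub>\<infinity>g\<in>prime_vectors x. vector_weight (primes_upto x) (\<lambda>p. q_prime x p / real p) g)"
proof -
  let ?w = "vector_weight (primes_upto x) (\<lambda>p. q_prime x p / real p)"
  let ?v = "vector_value (primes_upto x)"
  have inj: "inj_on ?v (prime_vectors x)"
    by (rule inj_on_vector_value[OF finite_primes_upto]) (simp add: primes_upto_def)
  have "(?w has_sum infsum ?w (prime_vectors x)) (prime_vectors x)"
    by (intro has_sum_infsum summable_on_vector_weight[OF finite_primes_upto])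
       (use q_prime_bounds in auto)
  then have "(((\<lambda>k. a_coef y k * q_coef x k) \<circ> ?v) has_sum infsum ?w (prime_vectors x)) (prime_vectors x)"
    by (rule has_sum_cong[THEN iffD1, rotated]) (simp add: a_coef_q_coef_vector_value[OF xy])
  then have "((\<lambda>k. a_coef y k * q_coef x k) has_sum infsum ?w (prime_vectors x)) (?v ` prime_vectors x)"
    using has_sum_reindex[OF inj] by blast
  then have "((\<lambda>k. a_coef y k * q_coef x k) has_sum infsum ?w (prime_vectors x)) UNIV"
    by (rule has_sum_cong_neutral[THEN iffD1, rotated -1]) (auto simp: a_coef_q_coef_eq_0)
  then show ?thesis
    by (rule has_sum_imp_sums)
qed

section \<open>The resonance sums\<close>

lemma inj_on_extend_shift:
  assumes "A \<subseteq> B"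
  shows "inj_on (\<lambda>(g, e, e'). (restrict (\<lambda>p. if p \<in> A then g p else 0) B, restrict (\<lambda>p. g p + e p) A, e'))
           (exponent_vectors A \<times> (exponent_vectors A \<times> exponent_vectors A))"
proof (rule inj_onI)
  fix a b
  assume a: "a \<in> exponent_vectors A \<times> (exponent_vectors A \<times> exponent_vectors A)"
    and b: "b \<in> exponent_vectors A \<times> (exponent_vectors A \<times> exponent_vectors A)"
    and eq: "(\<lambda>(g, e, e'). (restrict (\<lambda>p. if p \<in> A then g p else 0) B, restrict (\<lambda>p. g p + e p) A, e')) a
           = (\<lambda>(g, e, e'). (restrict (\<lambda>p. if p \<in> A then g p else 0) B, restrict (\<lambda>p. g p + e p) A, e')) b"
  obtain g e e' where ga: "a = (g, e, e')" by (cases a) auto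
  obtain h d d' where hb: "b = (h, d, d')" by (cases b) auto
  have mem: "g \<in> exponent_vectors A" "e \<in> exponent_vectors A" "h \<in> exponent_vectors A" "d \<in> exponent_vectors A"
    using a b by (simp_all add: ga hb)
  have ext: "restrict (\<lambda>p. if p \<in> A then g p else 0) B = restrict (\<lambda>p. if p \<in> A then h p else 0) B"
    and add: "restrict (\<lambda>p. g p + e p) A = restrict (\<lambda>p. h p + d p) A" and "e' = d'"
    using eq by (simp_all add: ga hb)
  have "g p = h p" if "p \<in> A" for p
    using fun_cong[OF ext, of p] that assms by auto
  then have "g = h"
    using mem by (intro PiE_ext[of _ A "\<lambda>_. UNIV"]) (auto simp: exponent_vectors_def)
  moreover have "e p = d p" if "p \<in> A" for p
    using fun_cong[OF add, of p] that \<open>g = h\<close> by simp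
  then have "e = d"
    using mem by (intro PiE_ext[of _ A "\<lambda>_. UNIV"]) (auto simp: exponent_vectors_def)
  ultimately show "a = b"
    using \<open>e' = d'\<close> by (simp add: ga hb)
qed

definition R_theta_sum :: "real \<Rightarrow> real \<Rightarrow> real \<Rightarrow> real" where
  "R_theta_sum x s \<alpha> = (\<Sum>\<^sub>\<infinity>(e,e')\<in>prime_vectors x \<times> prime_vectors x.
     q_weight x e * q_weight x e' * Re (theta s (\<alpha> * (vector_log (primes_upto x) e - vector_log (primes_upto x) e'))))"

definition zeta_R_theta_sum :: "real \<Rightarrow> real \<Rightarrow> real \<Rightarrow> real \<Rightarrow> real" where
  "zeta_R_theta_sum y x s \<alpha> = (\<Sum>\<^sub>\<infinity>(f,e,e')\<in>prime_vectors y \<times> (prime_vectors x \<times> prime_vectors x).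
     zeta_weight y f * (q_weight x e * q_weight x e')
     * Re (theta s (\<alpha> * (vector_log (primes_upto x) e - vector_log (primes_upto x) e' - vector_log (primes_upto y) f))))"

lemma has_sum_norm_Rfun_sq_Phi:
  assumes s: "s > 0"
  shows "((\<lambda>l::int. (cmod (Rfun x (\<alpha> * of_int l)))^2 * Phi (of_int l / s)) has_sum R_theta_sum x s \<alpha>) UNIV"
    and "(\<lambda>(e,e'). q_weight x e * q_weight x e' * Re (theta s (\<alpha> * (vector_log (primes_upto x) e - vector_log (primes_upto x) e'))))
           summable_on prime_vectors x \<times> prime_vectors x"
proof -
  let ?J = "prime_vectors x \<times> prime_vectors x"
  let ?c = "\<lambda>(e,e'). q_weight x e * q_weight x e'"
  let ?\<omega> = "\<lambda>(e,e'). vector_log (primes_upto x) e - vector_log (primes_upto x) e'"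
  have c: "\<And>j. j \<in> ?J \<Longrightarrow> 0 \<le> ?c j" "?c summable_on ?J"
    by (auto simp: q_weight_nonneg summable_on_q_weight intro!: summable_on_times_nonneg)
  note H = has_sum_exp_series_Phi[OF s c, of \<alpha> ?\<omega>]
  have series: "(\<Sum>\<^sub>\<infinity>j\<in>?J. complex_of_real (?c j) * cis (\<alpha> * of_int l * ?\<omega> j))
      = complex_of_real ((cmod (Rfun x (\<alpha> * of_int l)))^2)" for l :: int
    unfolding norm_Rfun_sq_expansion by (intro infsum_cong) auto
  have sum_eq: "(\<Sum>\<^sub>\<infinity>j\<in>?J. ?c j * Re (theta s (\<alpha> * ?\<omega> j))) = R_theta_sum x s \<alpha>"
    unfolding R_theta_sum_def by (intro infsum_cong) auto
  have "((\<lambda>l::int. complex_of_real ((cmod (Rfun x (\<alpha> * of_int l)))^2 * Phi (of_int l / s)))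
      has_sum complex_of_real (R_theta_sum x s \<alpha>)) UNIV"
    using H(1) unfolding series sum_eq of_real_mult[symmetric] .
  then show "((\<lambda>l::int. (cmod (Rfun x (\<alpha> * of_int l)))^2 * Phi (of_int l / s)) has_sum R_theta_sum x s \<alpha>) UNIV"
    by (simp only: has_sum_of_real_iff)
  show "(\<lambda>(e,e'). q_weight x e * q_weight x e' * Re (theta s (\<alpha> * (vector_log (primes_upto x) e - vector_log (primes_upto x) e'))))
      summable_on ?J"
    using H(2) by (simp add: case_prod_unfold)
qed

lemma has_sum_zeta_trunc_norm_Rfun_sq_Phi:
  assumes s: "s > 0"
  shows "((\<lambda>l::int. zeta_trunc y (\<alpha> * of_int l) * complex_of_real ((cmod (Rfun x (\<alpha> * of_int l)))^2 * Phi (of_int l / s)))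
           has_sum complex_of_real (zeta_R_theta_sum y x s \<alpha>)) UNIV"
    and "(\<lambda>(f,e,e'). zeta_weight y f * (q_weight x e * q_weight x e')
           * Re (theta s (\<alpha> * (vector_log (primes_upto x) e - vector_log (primes_upto x) e' - vector_log (primes_upto y) f))))
         summable_on prime_vectors y \<times> (prime_vectors x \<times> prime_vectors x)"
proof -
  let ?J = "prime_vectors y \<times> (prime_vectors x \<times> prime_vectors x)"
  let ?c = "\<lambda>(f,e,e'). zeta_weight y f * (q_weight x e * q_weight x e')"
  let ?\<omega> = "\<lambda>(f,e,e'). vector_log (primes_upto x) e - vector_log (primes_upto x) e' - vector_log (primes_upto y) f"
  have qq: "(\<lambda>(e,e'). q_weight x e * q_weight x e') summable_on prime_vectors x \<times> prime_vectors x"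
    by (auto simp: q_weight_nonneg summable_on_q_weight intro!: summable_on_times_nonneg)
  have "(\<lambda>(f,j). zeta_weight y f * (case j of (e,e') \<Rightarrow> q_weight x e * q_weight x e')) summable_on ?J"
    by (rule summable_on_times_nonneg[OF _ _ _ qq]) (auto simp: q_weight_nonneg zeta_weight_nonneg summable_on_zeta_weight)
  then have c: "\<And>j. j \<in> ?J \<Longrightarrow> 0 \<le> ?c j" "?c summable_on ?J"
    by (auto simp: q_weight_nonneg zeta_weight_nonneg case_prod_unfold)
  note H = has_sum_exp_series_Phi[OF s c, of \<alpha> ?\<omega>]
  have series: "(\<Sum>\<^sub>\<infinity>j\<in>?J. complex_of_real (?c j) * cis (\<alpha> * of_int l * ?\<omega> j))
      = zeta_trunc y (\<alpha> * of_int l) * complex_of_real ((cmod (Rfun x (\<alpha> * of_int l)))^2)" for l :: int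
    unfolding zeta_trunc_mult_norm_Rfun_sq_expansion by (intro infsum_cong) auto
  have "(\<Sum>\<^sub>\<infinity>j\<in>?J. ?c j * Re (theta s (\<alpha> * ?\<omega> j))) = zeta_R_theta_sum y x s \<alpha>"
    unfolding zeta_R_theta_sum_def by (intro infsum_cong) auto
  with H(1) show "((\<lambda>l::int. zeta_trunc y (\<alpha> * of_int l) * complex_of_real ((cmod (Rfun x (\<alpha> * of_int l)))^2 * Phi (of_int l / s)))
           has_sum complex_of_real (zeta_R_theta_sum y x s \<alpha>)) UNIV"
    unfolding series by (simp add: mult.assoc)
  show "(\<lambda>(f,e,e'). zeta_weight y f * (q_weight x e * q_weight x e')
           * Re (theta s (\<alpha> * (vector_log (primes_upto x) e - vector_log (primes_upto x) e' - vector_log (primes_upto y) f))))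
         summable_on ?J"
    using H(2) by (simp add: case_prod_unfold)
qed

lemma R_theta_sum_ge:
  assumes s: "s > 0"
  shows "sqrt (2 * pi) * s \<le> R_theta_sum x s \<alpha>"
proof -
  define e0 where "e0 = restrict (\<lambda>_. 0::nat) (primes_upto x)"
  have e0: "e0 \<in> prime_vectors x" "q_weight x e0 = 1" "vector_log (primes_upto x) e0 = 0"
    by (simp_all add: e0_def exponent_vectors_def vector_weight_def vector_log_def)
  \<comment> \<open>the diagonal term \<open>e = e' = 0\<close>, i.e. \<open>n = n' = 1\<close>\<close>
  have "sqrt (2 * pi) * s \<le> Re (theta s 0)"
    by (rule Re_theta_zero_ge[OF s])
  also have "\<dots> = (\<Sum>(e,e')\<in>{(e0,e0)}. q_weight x e * q_weight x e'
      * Re (theta s (\<alpha> * (vector_log (primes_upto x) e - vector_log (primes_upto x) e'))))"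
    using e0 by simp
  also have "\<dots> \<le> R_theta_sum x s \<alpha>"
    unfolding R_theta_sum_def using e0(1) has_sum_norm_Rfun_sq_Phi(2)[OF s]
    by (intro finite_sum_le_infsum)
       (auto intro!: mult_nonneg_nonneg q_weight_nonneg theta_real_nonneg(2)[OF s])
  finally show ?thesis .
qed

lemma zeta_R_theta_sum_ge:
  assumes s: "s > 0" and xy: "x \<le> y"
  shows "(\<Sum>\<^sub>\<infinity>g\<in>prime_vectors x. vector_weight (primes_upto x) (\<lambda>p. q_prime x p / real p) g) * R_theta_sum x s \<alpha>
       \<le> zeta_R_theta_sum y x s \<alpha>"
  unfolding R_theta_sum_def zeta_R_theta_sum_def
proof (rule infsum_mult_le_infsum_reindex)
  let ?ext = "\<lambda>g. restrict (\<lambda>p. if p \<in> primes_upto x then g p else 0) (primes_upto y)"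
  let ?add = "\<lambda>g e. restrict (\<lambda>p. g p + e p) (primes_upto x)"
  have sub: "primes_upto x \<subseteq> primes_upto y"
    by (rule primes_upto_mono[OF xy])
  show "vector_weight (primes_upto x) (\<lambda>p. q_prime x p / real p) summable_on prime_vectors x"
    by (rule summable_on_vector_weight[OF finite_primes_upto]) (use q_prime_bounds in auto)
  show "0 \<le> vector_weight (primes_upto x) (\<lambda>p. q_prime x p / real p) g" for g
    by (rule vector_weight_nonneg) (use q_prime_bounds in auto)
  show "inj_on (\<lambda>(g, e, e'). (?ext g, ?add g e, e')) (prime_vectors x \<times> (prime_vectors x \<times> prime_vectors x))"
    by (rule inj_on_extend_shift[OF sub])
  show "(\<lambda>(g, e, e'). (?ext g, ?add g e, e')) ` (prime_vectors x \<times> (prime_vectors x \<times> prime_vectors x))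
      \<subseteq> prime_vectors y \<times> (prime_vectors x \<times> prime_vectors x)"
    by (auto simp: exponent_vectors_def)
  \<comment> \<open>with \<open>m\<close> encoded by \<open>g\<close>: the weight \<open>q_m / m\<close> splits off, and the \<open>\<zeta>\<close>-frequency \<open>- log m\<close>
     cancels the shift of \<open>n\<close> by \<open>m\<close>\<close>
  show "(case (\<lambda>(g, e, e'). (?ext g, ?add g e, e')) (g, j) of (f, e, e') \<Rightarrow>
          zeta_weight y f * (q_weight x e * q_weight x e')
          * Re (theta s (\<alpha> * (vector_log (primes_upto x) e - vector_log (primes_upto x) e' - vector_log (primes_upto y) f))))
      = vector_weight (primes_upto x) (\<lambda>p. q_prime x p / real p) g
        * (case j of (e, e') \<Rightarrow> q_weight x e * q_weight x e'
             * Re (theta s (\<alpha> * (vector_log (primes_upto x) e - vector_log (primes_upto x) e'))))"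
    if "g \<in> prime_vectors x" "j \<in> prime_vectors x \<times> prime_vectors x" for g j
  proof -
    have "vector_weight (primes_upto x) (\<lambda>p. q_prime x p / real p) g = zeta_weight x g * q_weight x g"
      by (simp add: vector_weight_mult[symmetric] divide_inverse mult.commute)
    then show ?thesis
      by (cases j) (simp add: vector_weight_extend[OF finite_primes_upto sub] vector_log_extend[OF finite_primes_upto sub]
          vector_weight_add vector_log_add algebra_simps)
  qed
qed (use has_sum_norm_Rfun_sq_Phi(2)[OF s] has_sum_zeta_trunc_norm_Rfun_sq_Phi(2)[OF s]
     in \<open>auto intro!: mult_nonneg_nonneg q_weight_nonneg zeta_weight_nonneg theta_real_nonneg(2)[OF s]\<close>)

theorem mainTheorem6:
  fixes \<alpha> N y :: real
  assumes "\<alpha> > 0" and "N \<ge> 3" and "y \<ge> xpar N"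
  defines "x \<equiv> xpar N"
  shows "(\<lambda>l::int. (cmod (Rfun x (\<alpha> * of_int l)))\<^sup>2 * Phi (of_int l / N)) summable_on UNIV
    \<and> (\<Sum>\<^sub>\<infinity>l::int. (cmod (Rfun x (\<alpha> * of_int l)))\<^sup>2 * Phi (of_int l / N)) \<ge> sqrt (2 * pi) * N
    \<and> summable (\<lambda>k. a_coef y k * q_coef x k)
    \<and> (\<lambda>l::int. zeta_trunc y (\<alpha> * of_int l) * complex_of_real ((cmod (Rfun x (\<alpha> * of_int l)))\<^sup>2 * Phi (of_int l / N))) summable_on UNIV
    \<and> (\<Sum>\<^sub>\<infinity>l::int. zeta_trunc y (\<alpha> * of_int l) * complex_of_real ((cmod (Rfun x (\<alpha> * of_int l)))\<^sup>2 * Phi (of_int l / N))) \<in> \<real>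
    \<and> Re (\<Sum>\<^sub>\<infinity>l::int. zeta_trunc y (\<alpha> * of_int l) * complex_of_real ((cmod (Rfun x (\<alpha> * of_int l)))\<^sup>2 * Phi (of_int l / N))) \<ge> 0
    \<and> Re (\<Sum>\<^sub>\<infinity>l::int. zeta_trunc y (\<alpha> * of_int l) * complex_of_real ((cmod (Rfun x (\<alpha> * of_int l)))\<^sup>2 * Phi (of_int l / N)))
        \<ge> (\<Sum>k. a_coef y k * q_coef x k) * (\<Sum>\<^sub>\<infinity>l::int. (cmod (Rfun x (\<alpha> * of_int l)))\<^sup>2 * Phi (of_int l / N))"
proof -
  have s: "N > 0" and xy: "x \<le> y"
    using assms by (simp_all add: x_def)
  define C where "C = (\<Sum>\<^sub>\<infinity>g\<in>prime_vectors x. vector_weight (primes_upto x) (\<lambda>p. q_prime x p / real p) g)"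
  note R = has_sum_norm_Rfun_sq_Phi(1)[OF s, of x \<alpha>]
  note Z = has_sum_zeta_trunc_norm_Rfun_sq_Phi(1)[OF s, of y \<alpha> x]
  note aq = sums_a_coef_q_coef[OF xy, folded C_def]
  have R_ge: "sqrt (2 * pi) * N \<le> R_theta_sum x N \<alpha>"
    by (rule R_theta_sum_ge[OF s])
  have Z_ge: "C * R_theta_sum x N \<alpha> \<le> zeta_R_theta_sum y x N \<alpha>"
    unfolding C_def by (rule zeta_R_theta_sum_ge[OF s xy])
  have "0 \<le> sqrt (2 * pi) * N"
    using s by simp
  then have "0 \<le> C * R_theta_sum x N \<alpha>"
    using R_ge unfolding C_def
    by (intro mult_nonneg_nonneg infsum_nonneg vector_weight_nonneg) (auto simp: q_prime_bounds)
  then show ?thesis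
    using R Z aq R_ge Z_ge
    by (auto simp: summable_on_def infsumI sums_unique[symmetric] sums_summable)
qed

end
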